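(* Let $a,b$ be complex numbers of modulus one. There is no $6\times 6$ complex Hadamard matrix $H$ all of whose entries lie in $\{1,a,b\}$ which is complex equivalent to a matrix of the form $$H(\alpha,\beta)=\begin{bmatrix} 1&1&1&1&1&1\\ 1&1&1&-1&-1&-1\\ 1&\omega&\omega^2&\alpha&\alpha\omega&\alpha\omega^2\\ 1&\omega&\omega^2&-\alpha&-\alpha\omega&-\alpha\omega^2\\ 1&\omega^2&\omega&\beta&\beta\omega^2&\beta\omega\\ 1&\omega^2&\omega&-\beta&-\beta\omega^2&-\beta\omega \end{bmatrix},$$ where $\omega=e^{2\pi i/3}$ and $\alpha,\beta$ are complex numbers of modulus one.
   Context: A complex Hadamard matrix (CHM) of order $n$ is an $n\times n$ complex matrix $H$ all of whose entries have modulus one and which satisfies $HH^\dagger=nI$. A monomial unitary matrix is a unitary matrix each of whose rows and columns has exactly one nonzero entry, that entry having modulus one. Two $n\times n$ matrices $U,V$ are complex equivalent if $U=PVQ$ for some $n\times n$ monomial unitary matrices $P,Q$. *)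

theory Defs
  imports "HOL-Analysis.Analysis"
begin

definition ctrans :: "complex^'n^'m \<Rightarrow> complex^'m^'n" where
  "ctrans A = (\<chi> i j. cnj (A $ j $ i))"

definition complex_hadamard :: "complex^'n^'n \<Rightarrow> bool" where
  "complex_hadamard H \<longleftrightarrow>
     (\<forall>i j. norm (H $ i $ j) = 1) \<and> H ** ctrans H = of_nat CARD('n) *\<^sub>R mat 1"

definition monomial_unitary :: "complex^'n^'n \<Rightarrow> bool" where
  "monomial_unitary P \<longleftrightarrow>
     (\<forall>i. \<exists>!j. P $ i $ j \<noteq> 0) \<and> (\<forall>j. \<exists>!i. P $ i $ j \<noteq> 0) \<and>
     (\<forall>i j. P $ i $ j \<noteq> 0 \<longrightarrow> norm (P $ i $ j) = 1)"

definition complex_equivalent :: "complex^'n^'n \<Rightarrow> complex^'n^'n \<Rightarrow> bool" where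
  "complex_equivalent U V \<longleftrightarrow>
     (\<exists>P Q. monomial_unitary P \<and> monomial_unitary Q \<and> U = P ** V ** Q)"

definition omega3 :: complex where
  "omega3 = cis (2 * pi / 3)"

definition Hab :: "complex \<Rightarrow> complex \<Rightarrow> complex^6^6" where
  "Hab \<alpha> \<beta> = (let w = omega3;
     rows = [[1,1,1,1,1,1],
             [1,1,1,-1,-1,-1],
             [1,w,w^2,\<alpha>,\<alpha>*w,\<alpha>*w^2],
             [1,w,w^2,-\<alpha>,-\<alpha>*w,-\<alpha>*w^2],
             [1,w^2,w,\<beta>,\<beta>*w^2,\<beta>*w],
             [1,w^2,w,-\<beta>,-\<beta>*w^2,-\<beta>*w]]
   in \<chi> i j. rows ! nat (Rep_bit0 i) ! nat (Rep_bit0 j))"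

end

theory Submission
  imports Defs
begin

text \<open>Only the first three rows of \<open>H(\<alpha>, \<beta>)\<close> and the fact that the entries of \<open>H\<close> lie in
  \<open>S = {1, a, b}\<close> are used. After scaling rows and columns, the
  entries in these rows are \<open>x v\<close>; \<open>c x v\<close> with a sign change on the last three columns; and
  \<open>d \<omega>^j x j\<close>, \<open>d \<alpha> \<omega>^j x (3 + j)\<close>. If \<open>S\<close> contained no pair \<open>\<plusminus>e\<close>, the two halves of
  row 0 would take disjoint values, so one half would be constant; row 2 would then make \<open>S\<close> a
  coset of the cube roots of unity, on which no ratio \<open>c\<close> can flip signs. Hence
  \<open>S \<subseteq> {e, -e, z}\<close>. For such \<open>S\<close>, whether \<open>y1 y2 = \<plusminus> y3 y4\<close> is decided by counting the
  occurrences of \<open>z\<close>; so the \<open>2 \<times> 2\<close> minors of rows 0 and 2, whose ratios are powers of \<open>\<omega>\<close>,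
  force \<open>z\<close> into both halves of row 0 without filling the first half, and the minors of rows 0
  and 1, with ratio \<open>-1\<close>, then give \<open>c z = z = -c z\<close>.\<close>

lemma cube_root_unity_powers:
  fixes w :: complex
  assumes "w^3 = 1" "w \<noteq> 1"
  shows "w \<noteq> -1" "w^2 \<noteq> 1" "w^2 \<noteq> -1" "w^4 = w"
proof -
  show "w \<noteq> -1" using assms by auto
  have cube: "w^3 = w^2 * w" and fourth: "w^4 = w^2 * w^2" "w^4 = w^3 * w"
    by (simp_all add: power2_eq_square power3_eq_cube power4_eq_xxxx)
  show w4: "w^4 = w" using fourth(2) assms(1) by simp
  show "w^2 \<noteq> 1" using cube assms by auto
  show "w^2 \<noteq> -1"
  proof
    assume "w^2 = -1"
    then have "w^4 = 1" using fourth(1) by simp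
    with w4 assms(2) show False by simp
  qed
qed

lemma ratio_power_eq_one:
  fixes S :: "'a::field set"
  assumes "\<forall>y\<in>S. y^n = E" "E \<noteq> 0" "r \<in> S" "s \<in> S" "r' \<in> S" "s' \<in> S"
    and "r * s = k * (r' * s')"
  shows "k^n = 1"
proof -
  have "(r * s)^n = (k * (r' * s'))^n" using assms(7) by simp
  then have "E * E = k^n * (E * E)" using assms(1,3-6) by (simp add: power_mult_distrib)
  then show ?thesis using assms(2) by simp
qed

lemma card_le_3_cover:
  assumes "finite S" "card S \<le> 3" "e \<in> S" "f \<in> S" "e \<noteq> f"
  obtains z where "z \<in> S" "S \<subseteq> {e, f, z}"
proof (cases "S \<subseteq> {e, f}")
  case True
  then show ?thesis using that[of e] assms(3) by blast
next
  case False
  then obtain z where z: "z \<in> S - {e, f}" by blast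
  have "card (S - {e, f}) = card S - card {e, f}"
    using assms(3,4) by (intro card_Diff_subset) auto
  also have "card {e, f} = 2" using assms(5) by simp
  finally have "card (S - {e, f}) \<le> Suc 0" using assms(2) by linarith
  then have "\<forall>y\<in>S - {e, f}. y = z" using z assms(1) card_le_Suc0_iff_eq[of "S - {e, f}"] by blast
  then show ?thesis using that[of z] z by blast
qed

lemma cube_root_coset_cover:
  fixes S :: "complex set"
  assumes "finite S" "card S \<le> 3" "w^3 = 1" "w \<noteq> 1" "t \<noteq> 0"
    and coset: "\<And>j. j < 3 \<Longrightarrow> w^j * t \<in> S"
  shows "\<forall>y\<in>S. y^3 = t^3"
proof -
  have sub: "{t, w * t, w^2 * t} \<subseteq> S" using coset[of 0] coset[of 1] coset[of 2] by simp
  have "w * t \<noteq> w^2 * t" using assms(3-5) by (auto simp: power2_eq_square)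
  then have "card {t, w * t, w^2 * t} = 3"
    using assms(4,5) cube_root_unity_powers(2)[OF assms(3,4)] by auto
  then have "S = {t, w * t, w^2 * t}"
    using card_subset_eq[OF assms(1) sub] card_mono[OF assms(1) sub] assms(2) by simp
  moreover have "(w^2)^3 = (w^3)^2" by (simp flip: power_mult)
  ultimately show ?thesis using assms(3) by (auto simp: power_mult_distrib)
qed

lemma cube_root_coset_excludes_sign_flip:
  fixes S :: "complex set"
  assumes "finite S" "card S \<le> 3" "0 \<notin> S" "w^3 = 1" "w \<noteq> 1"
    and coset: "\<And>j. j < 3 \<Longrightarrow> w^j * t \<in> S"
    and "p \<in> S" "c * p \<in> S" "q \<in> S" "-(c * q) \<in> S"
  shows False
proof -
  have "t \<in> S" using coset[of 0] by simp
  then have cubes: "\<forall>v\<in>S. v^3 = t^3" and "t^3 \<noteq> 0"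
    using cube_root_coset_cover[OF assms(1,2,4,5) _ coset] assms(3) by auto
  have "c^3 = 1"
    by (rule ratio_power_eq_one[OF cubes \<open>t^3 \<noteq> 0\<close> \<open>c * p \<in> S\<close> \<open>p \<in> S\<close> \<open>p \<in> S\<close> \<open>p \<in> S\<close>])
      (simp add: mult.assoc)
  moreover have "(-c)^3 = 1"
    by (rule ratio_power_eq_one[OF cubes \<open>t^3 \<noteq> 0\<close> \<open>-(c * q) \<in> S\<close> \<open>q \<in> S\<close> \<open>q \<in> S\<close> \<open>q \<in> S\<close>])
      simp
  ultimately show False by simp
qed

lemma two_valued_product_eq_iff:
  fixes E Z :: "'a::field"
  assumes "E \<noteq> 0" "Z \<noteq> 0" "E \<noteq> Z" "Z * Z \<noteq> E * E"
  shows "(if A then Z else E) * (if B then Z else E) = (if C then Z else E) * (if D then Z else E)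
    \<longleftrightarrow> of_bool A + of_bool B = (of_bool C + of_bool D :: nat)"
  using assms by (cases A; cases B; cases C; cases D) (simp_all add: mult.commute)

lemma z_count_eq_iff_prod_eq_pm:
  fixes e z :: complex
  assumes y: "y1 \<in> {e, -e, z}" "y2 \<in> {e, -e, z}" "y3 \<in> {e, -e, z}" "y4 \<in> {e, -e, z}"
    and "e \<noteq> 0" "z \<noteq> 0" "z^4 \<noteq> e^4"
  shows "(y1 * y2 = y3 * y4 \<or> y1 * y2 = -(y3 * y4)) \<longleftrightarrow>
    of_bool (y1 = z) + of_bool (y2 = z) = (of_bool (y3 = z) + of_bool (y4 = z) :: nat)"
proof -
  have sq4: "z^2 * z^2 \<noteq> e^2 * e^2" using assms(7) by (simp flip: power_add)
  have "z^2 \<noteq> e^2"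
  proof
    assume "z^2 = e^2"
    with sq4 show False by simp
  qed
  then have sq: "y^2 = (if y = z then z^2 else e^2)" if "y \<in> {e, -e, z}" for y
    using that by auto
  \<comment> \<open>Squaring identifies \<open>u\<close> with \<open>-u\<close>, and the squares of \<open>e\<close>, \<open>-e\<close>, \<open>z\<close> are \<open>e\<^sup>2\<close> or \<open>z\<^sup>2\<close>.\<close>
  have "(y1 * y2 = y3 * y4 \<or> y1 * y2 = -(y3 * y4)) \<longleftrightarrow> (y1 * y2)^2 = (y3 * y4)^2"
    by (simp add: power2_eq_iff)
  also have "\<dots> \<longleftrightarrow> (if y1 = z then z^2 else e^2) * (if y2 = z then z^2 else e^2)
                   = (if y3 = z then z^2 else e^2) * (if y4 = z then z^2 else e^2)"
    by (simp only: power_mult_distrib sq[OF y(1)] sq[OF y(2)] sq[OF y(3)] sq[OF y(4)])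
  also have "\<dots> \<longleftrightarrow> of_bool (y1 = z) + of_bool (y2 = z) = (of_bool (y3 = z) + of_bool (y4 = z) :: nat)"
    by (rule two_valued_product_eq_iff) (use sq4 \<open>z^2 \<noteq> e^2\<close> assms(5,6) in auto)
  finally show ?thesis .
qed

lemma antipodal_pair_or_constant_triple:
  fixes S :: "complex set" and x :: "nat \<Rightarrow> complex"
  assumes "finite S" "card S \<le> 3" and x: "\<And>v. v < 6 \<Longrightarrow> x v \<in> S"
    and flip: "\<And>j. j < 3 \<Longrightarrow> c * x j \<in> S" "\<And>j. j < 3 \<Longrightarrow> -(c * x (3 + j)) \<in> S"
  shows "(\<exists>e\<in>S. -e \<in> S) \<or> (\<forall>j<3. x j = x 0) \<or> (\<forall>j<3. x (3 + j) = x 3)"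
proof -
  define L R where "L = x ` {..<3}" and "R = (\<lambda>j. x (3 + j)) ` {..<3}"
  have fin: "finite L" "finite R" unfolding L_def R_def by simp_all
  have mem: "x j \<in> L" "x (3 + j) \<in> R" if "j < 3" for j
    using that unfolding L_def R_def by auto
  have left_constant: "\<forall>j<3. x j = x 0" if "card L \<le> Suc 0"
    using that mem(1) card_le_Suc0_iff_eq[OF fin(1)] by simp
  have right_constant: "\<forall>j<3. x (3 + j) = x 3" if "card R \<le> Suc 0"
    using that mem(2) card_le_Suc0_iff_eq[OF fin(2)] by (metis add_0_right zero_less_numeral)
  show ?thesis
  proof (cases "\<exists>e\<in>S. -e \<in> S")
    case False
    have "x j \<noteq> x (3 + l)" if "j < 3" "l < 3" for j l
    proof
      assume "x j = x (3 + l)"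
      then have "c * x j \<in> S" "-(c * x j) \<in> S"
        using flip(1)[OF that(1)] flip(2)[OF that(2)] by simp_all
      with False show False by blast
    qed
    then have "L \<inter> R = {}" unfolding L_def R_def by auto
    then have "card L + card R = card (L \<union> R)" using fin by (simp add: card_Un_disjoint)
    also have "\<dots> \<le> card S"
      using x assms(1) by (intro card_mono) (auto simp: L_def R_def)
    finally have "card L + card R \<le> 3" using assms(2) by linarith
    moreover have "card L > 0" "card R > 0" using fin mem[of 0] by (auto simp: card_gt_0_iff)
    ultimately have "card L \<le> Suc 0 \<or> card R \<le> Suc 0" by linarith
    then show ?thesis using left_constant right_constant by blast
  qed simp
qed

lemma triple_contains_z_and_non_z:
  fixes S :: "complex set"
  assumes S: "S \<subseteq> {e, -e, z}" "e \<noteq> 0" "z \<noteq> 0" "z^4 \<noteq> e^4" and w: "w^3 = 1" "w \<noteq> 1"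
    and y: "\<And>j. j < 3 \<Longrightarrow> y j \<in> S" "\<And>j. j < 3 \<Longrightarrow> g * w^j * y j \<in> S"
  shows "(\<exists>j<3. y j = z) \<and> (\<exists>j<3. y j \<noteq> z)"
proof -
  \<comment> \<open>If \<open>F\<close> took the same value at \<open>j < l\<close>, the \<open>2 \<times> 2\<close> minor on columns \<open>j, l\<close> would
    have ratio \<open>w^(l - j) = \<plusminus>1\<close>; so \<open>F\<close> takes all three values \<open>-1, 0, 1\<close>.\<close>
  define F where "F j = (of_bool (y j = z) - of_bool (g * w^j * y j = z) :: int)" for j
  have nz: "v \<noteq> 0" if "v \<in> S" for v using S that by auto
  have swap: "(of_bool A - of_bool B :: int) = of_bool C - of_bool D
      \<Longrightarrow> of_bool A + of_bool D = (of_bool C + of_bool B :: nat)" for A B C D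
    by (cases A; cases B; cases C; cases D) simp_all
  have differ: "F j \<noteq> F l" if jl: "j < l" "l < 3" for j l
  proof
    have "j < 3" using jl by simp
    define r s r' s' where "r = y j" "s = g * w^j * y j" "r' = y l" "s' = g * w^l * y l"
    have in_S: "r \<in> S" "s \<in> S" "r' \<in> S" "s' \<in> S"
      unfolding r_s_r'_s'_def using y \<open>j < 3\<close> jl(2) by simp_all
    assume "F j = F l"
    then have "of_bool (r = z) + of_bool (s' = z) = (of_bool (r' = z) + of_bool (s = z) :: nat)"
      unfolding F_def r_s_r'_s'_def by (rule swap)
    moreover have "r \<in> {e, -e, z}" "s' \<in> {e, -e, z}" "r' \<in> {e, -e, z}" "s \<in> {e, -e, z}"
      using in_S S(1) by blast+
    ultimately have pm: "r * s' = r' * s \<or> r * s' = -(r' * s)"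
      using z_count_eq_iff_prod_eq_pm[of r e z s' r' s, OF _ _ _ _ S(2-4)] by simp
    have "w^l = w^(l - j) * w^j" using jl by (simp flip: power_add)
    then have ratio: "r * s' = w^(l - j) * (r' * s)" unfolding r_s_r'_s'_def by simp
    have nonzero: "r' * s \<noteq> 0" using nz in_S by simp
    from pm have "w^(l - j) * (r' * s) = 1 * (r' * s) \<or> w^(l - j) * (r' * s) = (-1) * (r' * s)"
      unfolding ratio by simp
    then have "w^(l - j) = 1 \<or> w^(l - j) = -1"
      using mult_right_cancel[OF nonzero] by blast
    moreover have "l - j = 1 \<or> l - j = 2" using jl by auto
    ultimately show False using cube_root_unity_powers[OF w] w(2) by auto
  qed
  have range: "F j \<in> {-1, 0, 1}" for j unfolding F_def by auto
  have "1 \<in> {F 0, F 1, F 2}" "-1 \<in> {F 0, F 1, F 2}"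
    using differ[of 0 1] differ[of 0 2] differ[of 1 2] range[of 0] range[of 1] range[of 2]
    by auto
  moreover have "F ` {..<3} = {F 0, F 1, F 2}" by (auto simp: lessThan_nat_numeral)
  ultimately have "1 \<in> F ` {..<3}" "-1 \<in> F ` {..<3}" by (simp_all only:)
  then obtain j l where "j < 3" "F j = 1" "l < 3" "F l = -1" by auto
  moreover have "(of_bool A - of_bool B :: int) = 1 \<Longrightarrow> A"
    and "(of_bool A - of_bool B :: int) = -1 \<Longrightarrow> \<not> A" for A B
    by (cases A; cases B; simp)+
  ultimately show ?thesis unfolding F_def by blast
qed

lemma sign_flip_excludes_z:
  fixes S :: "complex set"
  assumes S: "S \<subseteq> {e, -e, z}" "e \<noteq> 0" "z \<noteq> 0" "z^4 \<noteq> e^4"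
    and "c * z \<in> S" "-(c * z) \<in> S" "y \<in> S" "c * y \<in> S" "y \<noteq> z"
  shows False
proof -
  have mem: "c * z \<in> {e, -e, z}" "-(c * z) \<in> {e, -e, z}" "y \<in> {e, -e, z}" "c * y \<in> {e, -e, z}"
    "z \<in> {e, -e, z}" using assms(5-8) S(1) by blast+
  have "y * -(c * z) = -(z * (c * y))" "z * -(c * z) = -(z * (c * z))" by simp_all
  then have "of_bool (y = z) + of_bool (-(c * z) = z) = (of_bool (z = z) + of_bool (c * y = z) :: nat)"
    and "of_bool (z = z) + of_bool (-(c * z) = z) = (of_bool (z = z) + of_bool (c * z = z) :: nat)"
    using z_count_eq_iff_prod_eq_pm[OF _ _ _ _ S(2-4)] mem by blast+
  moreover have "of_bool (y = z) = (0 :: nat)" "of_bool (z = z) = (1 :: nat)"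
    using \<open>y \<noteq> z\<close> by simp_all
  ultimately have "of_bool (-(c * z) = z) = (1 + of_bool (c * y = z) :: nat)"
    and "of_bool (-(c * z) = z) = (of_bool (c * z = z) :: nat)" by linarith+
  moreover have "(of_bool P :: nat) = 1 + n \<Longrightarrow> P"
    and "(of_bool P :: nat) = of_bool Q \<Longrightarrow> P \<Longrightarrow> Q" for P Q n
    by (cases P; cases Q; simp)+
  ultimately have "-(c * z) = z" and "c * z = z" by blast+
  then show False using \<open>z \<noteq> 0\<close> by simp
qed

lemma dephased_top_rows_impossible:
  fixes S :: "complex set" and x :: "nat \<Rightarrow> complex"
  assumes S: "finite S" "card S \<le> 3" "0 \<notin> S" and w: "w^3 = 1" "w \<noteq> 1"
    and row0: "\<And>v. v < 6 \<Longrightarrow> x v \<in> S"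
    and row1: "\<And>j. j < 3 \<Longrightarrow> c * x j \<in> S" "\<And>j. j < 3 \<Longrightarrow> -(c * x (3 + j)) \<in> S"
    and row2: "\<And>j. j < 3 \<Longrightarrow> d * w^j * x j \<in> S" "\<And>j. j < 3 \<Longrightarrow> d * \<alpha> * w^j * x (3 + j) \<in> S"
  shows False
proof -
  have nz: "v \<noteq> 0" if "v \<in> S" for v using S(3) that by auto
  have row0_left: "x j \<in> S" and row0_right: "x (3 + j) \<in> S" if "j < 3" for j
    using row0 that by simp_all
  have no_constant_triple: False
    if "\<forall>j<3. y j = y 0" and triple: "\<And>j. j < 3 \<Longrightarrow> g * w^j * y j \<in> S" for g y
  proof (rule cube_root_coset_excludes_sign_flip[OF S w _ row0_left[of 0] row1(1)[of 0] row0_right[of 0] row1(2)[of 0]])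
    show "w^j * (g * y 0) \<in> S" if "j < 3" for j
    proof -
      have "y j = y 0" using \<open>\<forall>j<3. y j = y 0\<close> that by blast
      then have "w^j * (g * y 0) = g * w^j * y j" by (simp add: ac_simps)
      with triple[OF that] show ?thesis by (simp only:)
    qed
  qed simp_all
  have "\<not> (\<forall>j<3. x j = x 0)" using no_constant_triple[of x d] row2(1) by blast
  moreover have "\<not> (\<forall>j<3. x (3 + j) = x 3)"
  proof
    assume "\<forall>j<3. x (3 + j) = x 3"
    then have "\<forall>j<3. x (3 + j) = x (3 + 0)" by simp
    then show False by (rule no_constant_triple) (rule row2(2))
  qed
  ultimately obtain e where e: "e \<in> S" "-e \<in> S"
    using antipodal_pair_or_constant_triple[of S x c, OF S(1,2) row0 row1] by blast
  moreover have "e \<noteq> -e" using nz e by auto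
  ultimately obtain z where z: "z \<in> S" "S \<subseteq> {e, -e, z}" by (rule card_le_3_cover[OF S(1,2)])
  have "e \<noteq> 0" "z \<noteq> 0" using nz e z by auto
  have z4: "z^4 \<noteq> e^4"
  proof
    assume "z^4 = e^4"
    then have "\<forall>v\<in>S. v^4 = e^4" using z(2) by auto
    then have "w^4 = 1"
      by (rule ratio_power_eq_one[OF _ _ row0[of 0] row2(1)[of 1] row0[of 1] row2(1)[of 0]])
        (use \<open>e \<noteq> 0\<close> in \<open>auto simp: ac_simps\<close>)
    then show False using cube_root_unity_powers(4)[OF w] w(2) by simp
  qed
  obtain j v where jv: "j < 3" "x j = z" "v < 3" "x v \<noteq> z"
    using triple_contains_z_and_non_z[OF z(2) \<open>e \<noteq> 0\<close> \<open>z \<noteq> 0\<close> z4 w row0_left row2(1)] by blast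
  obtain u where u: "u < 3" "x (3 + u) = z"
    using triple_contains_z_and_non_z[OF z(2) \<open>e \<noteq> 0\<close> \<open>z \<noteq> 0\<close> z4 w, of "\<lambda>j. x (3 + j)" "d * \<alpha>"]
      row0_right row2(2) by blast
  have "c * z \<in> S" using row1(1)[OF jv(1)] jv(2) by simp
  moreover have "-(c * z) \<in> S" using row1(2)[OF u(1)] u(2) by simp
  ultimately show False
    using sign_flip_excludes_z[OF z(2) \<open>e \<noteq> 0\<close> \<open>z \<noteq> 0\<close> z4 _ _ row0_left[OF jv(3)]
        row1(1)[OF jv(3)] jv(4)]
    by blast
qed

definition top_rows :: "complex \<Rightarrow> complex \<Rightarrow> nat \<Rightarrow> nat \<Rightarrow> complex" where
  "top_rows w \<alpha> k v =
     [[1, 1, 1, 1, 1, 1], [1, 1, 1, -1, -1, -1], [1, w, w^2, \<alpha>, \<alpha> * w, \<alpha> * w^2]] ! k ! v"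

lemma top_rows_entries:
  assumes "j < 3"
  shows "top_rows w \<alpha> 0 j = 1" "top_rows w \<alpha> 0 (3 + j) = 1"
    "top_rows w \<alpha> 1 j = 1" "top_rows w \<alpha> 1 (3 + j) = -1"
    "top_rows w \<alpha> 2 j = w^j" "top_rows w \<alpha> 2 (3 + j) = \<alpha> * w^j"
proof -
  have "j = 0 \<or> j = 1 \<or> j = 2" using assms by auto
  then show "top_rows w \<alpha> 0 j = 1" "top_rows w \<alpha> 0 (3 + j) = 1"
    "top_rows w \<alpha> 1 j = 1" "top_rows w \<alpha> 1 (3 + j) = -1"
    "top_rows w \<alpha> 2 j = w^j" "top_rows w \<alpha> 2 (3 + j) = \<alpha> * w^j"
    by (auto simp: top_rows_def)
qed

lemma top_rows_not_rescalable:
  fixes S :: "complex set" and p q :: "nat \<Rightarrow> complex"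
  assumes S: "finite S" "card S \<le> 3" "0 \<notin> S" and w: "w^3 = 1" "w \<noteq> 1"
    and entries: "\<And>k v. k < 3 \<Longrightarrow> v < 6 \<Longrightarrow> p k * top_rows w \<alpha> k v * q v \<in> S"
  shows False
proof -
  have entry: "p k * top_rows w \<alpha> k j * q j \<in> S" "p k * top_rows w \<alpha> k (3 + j) * q (3 + j) \<in> S"
    if "k < 3" "j < 3" for k j
    using entries that by simp_all
  have "p 0 \<noteq> 0" using entry(1)[of 0 0] top_rows_entries(1)[of 0] S(3) by auto
  define x where "x v = p 0 * q v" for v
  have rescale: "p k * t * q v = p k / p 0 * t * x v" for k t v
    using \<open>p 0 \<noteq> 0\<close> by (simp add: x_def)
  show False
  proof (rule dephased_top_rows_impossible[OF S w])
    show "x v \<in> S" if "v < 6" for v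
    proof (cases "v < 3")
      case True
      then show ?thesis using entry(1)[of 0 v] top_rows_entries(1) by (simp add: x_def)
    next
      case False
      then have "v = 3 + (v - 3)" "v - 3 < 3" using that by simp_all
      then show ?thesis using entry(2)[of 0 "v - 3"] top_rows_entries(2)[of "v - 3"] by (simp add: x_def)
    qed
    show "p 1 / p 0 * x j \<in> S" "-(p 1 / p 0 * x (3 + j)) \<in> S" if "j < 3" for j
      using entry[of 1 j] top_rows_entries(3,4)[OF that] that
      unfolding rescale by simp_all
    show "p 2 / p 0 * w^j * x j \<in> S" "p 2 / p 0 * \<alpha> * w^j * x (3 + j) \<in> S" if "j < 3" for j
      using entry[of 2 j] top_rows_entries(5,6)[OF that] that
      unfolding rescale by (simp_all add: ac_simps)
  qed
qed

lemma sum_UNIV_single: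
  fixes f :: "'a::finite \<Rightarrow> 'b::comm_monoid_add"
  assumes "\<And>m. m \<noteq> k \<Longrightarrow> f m = 0"
  shows "sum f UNIV = f k"
  using assms by (subst sum.mono_neutral_right[of UNIV "{k}"]) auto

lemma matrix_triple_product_entry:
  fixes P V Q :: "'a::semiring_1^'n^'n"
  assumes "\<And>m. m \<noteq> k \<Longrightarrow> P $ i $ m = 0" "\<And>m. m \<noteq> v \<Longrightarrow> Q $ m $ j = 0"
  shows "(P ** V ** Q) $ i $ j = P $ i $ k * V $ k $ v * Q $ v $ j"
proof -
  have entry: "(A ** B) $ r $ s = (\<Sum>t\<in>UNIV. A $ r $ t * B $ t $ s)"
    for A B :: "'a^'n^'n" and r s
    by (simp add: matrix_matrix_mult_def)
  have "(P ** V ** Q) $ i $ j = (P ** V) $ i $ v * Q $ v $ j"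
    unfolding entry[of "P ** V" Q] using assms(2) by (subst sum_UNIV_single[of v]) auto
  also have "(P ** V) $ i $ v = P $ i $ k * V $ k $ v"
    unfolding entry[of P V] using assms(1) by (subst sum_UNIV_single[of k]) auto
  finally show ?thesis .
qed

lemma monomial_unitary_column_support:
  assumes "monomial_unitary P"
  obtains i where "P $ i $ j \<noteq> 0" "\<And>m. m \<noteq> j \<Longrightarrow> P $ i $ m = 0"
proof -
  from assms have "\<exists>!i. P $ i $ j \<noteq> 0" unfolding monomial_unitary_def by simp
  then obtain i where i: "P $ i $ j \<noteq> 0" by (blast dest: ex1_implies_ex)
  from assms have "\<exists>!m. P $ i $ m \<noteq> 0" unfolding monomial_unitary_def by simp
  then obtain m0 where "\<And>m. P $ i $ m \<noteq> 0 \<Longrightarrow> m = m0" by (elim ex1E) blast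
  with i have "P $ i $ m = 0" if "m \<noteq> j" for m using that by blast
  with i show ?thesis using that by blast
qed

lemma monomial_unitary_row_support:
  assumes "monomial_unitary Q"
  obtains j where "Q $ i $ j \<noteq> 0" "\<And>m. m \<noteq> i \<Longrightarrow> Q $ m $ j = 0"
proof -
  from assms have "\<exists>!j. Q $ i $ j \<noteq> 0" unfolding monomial_unitary_def by simp
  then obtain j where j: "Q $ i $ j \<noteq> 0" by (blast dest: ex1_implies_ex)
  from assms have "\<exists>!m. Q $ m $ j \<noteq> 0" unfolding monomial_unitary_def by simp
  then obtain m0 where "\<And>m. Q $ m $ j \<noteq> 0 \<Longrightarrow> m = m0" by (elim ex1E) blast
  with j have "Q $ m $ j = 0" if "m \<noteq> i" for m using that by blast
  with j show ?thesis using that by blast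
qed

lemma monomial_sandwich_entries:
  fixes P V Q :: "complex^'n^'n"
  assumes "monomial_unitary P" "monomial_unitary Q"
  obtains \<sigma> \<tau> :: "'n \<Rightarrow> 'n" and p q :: "'n \<Rightarrow> complex"
  where "\<And>k v. (P ** V ** Q) $ \<sigma> k $ \<tau> v = p k * V $ k $ v * q v"
proof -
  have "\<exists>i. \<forall>m. m \<noteq> k \<longrightarrow> P $ i $ m = 0" for k
    using monomial_unitary_column_support[OF assms(1)] by metis
  then obtain \<sigma> where \<sigma>: "\<And>k m. m \<noteq> k \<Longrightarrow> P $ \<sigma> k $ m = 0" by metis
  have "\<exists>j. \<forall>m. m \<noteq> v \<longrightarrow> Q $ m $ j = 0" for v
    using monomial_unitary_row_support[OF assms(2)] by metis
  then obtain \<tau> where \<tau>: "\<And>v m. m \<noteq> v \<Longrightarrow> Q $ m $ \<tau> v = 0" by metis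
  show ?thesis
  proof (rule that)
    show "(P ** V ** Q) $ \<sigma> k $ \<tau> v = P $ \<sigma> k $ k * V $ k $ v * Q $ v $ \<tau> v" for k v
      by (rule matrix_triple_product_entry) (use \<sigma> \<tau> in auto)
  qed
qed

lemma Hab_top_rows:
  assumes "k < 3" "v < 6"
  shows "Hab \<alpha> \<beta> $ of_nat k $ of_nat v = top_rows omega3 \<alpha> k v"
proof -
  have "Rep_bit0 (of_nat k :: 6) = int k" "Rep_bit0 (of_nat v :: 6) = int v"
    using assms by (simp_all add: bit0.of_nat_eq bit0.Abs_inverse)
  moreover have "k = 0 \<or> k = 1 \<or> k = 2" using assms(1) by auto
  ultimately show ?thesis unfolding Hab_def top_rows_def Let_def by auto
qed

lemma omega3_primitive: "omega3^3 = 1" "omega3 \<noteq> 1"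
proof -
  show "omega3^3 = 1" unfolding omega3_def using Complex.DeMoivre[of "2 * pi / 3" 3] by simp
  have "sin (2 * pi / 3) > 0" by (rule sin_gt_zero) auto
  then show "omega3 \<noteq> 1" unfolding omega3_def by (auto simp: complex_eq_iff)
qed

theorem mainTheorem3:
  fixes a b :: complex
  assumes "norm a = 1" and "norm b = 1"
  shows "\<not> (\<exists>(H::complex^6^6) \<alpha> \<beta>.
            complex_hadamard H \<and> (\<forall>i j. H $ i $ j \<in> {1, a, b}) \<and>
            norm \<alpha> = 1 \<and> norm \<beta> = 1 \<and> complex_equivalent H (Hab \<alpha> \<beta>))"
proof
  assume "\<exists>(H::complex^6^6) \<alpha> \<beta>.
            complex_hadamard H \<and> (\<forall>i j. H $ i $ j \<in> {1, a, b}) \<and>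
            norm \<alpha> = 1 \<and> norm \<beta> = 1 \<and> complex_equivalent H (Hab \<alpha> \<beta>)"
  then obtain H :: "complex^6^6" and \<alpha> \<beta> P Q where
    H: "\<forall>i j. H $ i $ j \<in> {1, a, b}" and "monomial_unitary P" "monomial_unitary Q"
    and "H = P ** Hab \<alpha> \<beta> ** Q"
    unfolding complex_equivalent_def by blast
  then obtain \<sigma> \<tau> p q where "\<And>k v. H $ \<sigma> k $ \<tau> v = p k * Hab \<alpha> \<beta> $ k $ v * q v"
    using monomial_sandwich_entries by metis
  then have entries: "p (of_nat k) * top_rows omega3 \<alpha> k v * q (of_nat v) \<in> {1, a, b}"
    if "k < 3" "v < 6" for k v
    using H Hab_top_rows[OF that] by metis
  have "0 \<notin> {1, a, b}" using assms by auto
  moreover have "card {1, a, b} \<le> 3" by (auto simp: card_insert_if)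
  ultimately show False
    using top_rows_not_rescalable[OF _ _ _ omega3_primitive entries] by blast
qed

end
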